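(* Let $X,Y$ be presheaves of sets on $\mathscr{V}_f$ such that $X$ takes values in finite sets and $Y$ is finite. Then the set of natural transformations $\mathrm{Hom}(X,Y)$ is finite.
   Context: $p$ prime, $\mathbb{F}=\mathbb{F}_p$, $\mathscr{V}_f$ finite-dimensional $\mathbb{F}$-vector spaces; presheaves are contravariant functors $\mathscr{V}_f\to$ Sets. A presheaf $Y$ is finite if there is a monomorphism $Y\hookrightarrow F_Y$ of presheaves of sets with $F_Y$ a functor $\mathscr{V}_f^{\mathrm{op}}\to$ ($\mathbb{F}$-vector spaces) having a finite composition series. *)

theory Defs
  imports Main "HOL-Computational_Algebra.Primes"
begin

(* Skeleton of V_f: object n stands for F_p^n. A morphism F_p^m -> F_p^n is an
   n x m matrix with entries in {0..<p}, zero outside the index range. *)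
type_synonym mat = "nat \<Rightarrow> nat \<Rightarrow> nat"

definition is_mor :: "nat \<Rightarrow> nat \<Rightarrow> nat \<Rightarrow> mat \<Rightarrow> bool" where
  "is_mor p m n A \<longleftrightarrow>
     (\<forall>i j. (i < n \<and> j < m \<longrightarrow> A i j < p) \<and> (\<not> (i < n \<and> j < m) \<longrightarrow> A i j = 0))"

definition mat_comp :: "nat \<Rightarrow> nat \<Rightarrow> mat \<Rightarrow> mat \<Rightarrow> mat" where
  "mat_comp p m A B = (\<lambda>i j. (\<Sum>k<m. A i k * B k j) mod p)"

definition mat_id :: "nat \<Rightarrow> mat" where
  "mat_id n = (\<lambda>i j. if i < n \<and> i = j then 1 else 0)"

(* A presheaf of sets: Xo n = X(F^n); for f : F^m -> F^n, Xa m n f : X(F^n) -> X(F^m). *)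
definition presheaf :: "nat \<Rightarrow> (nat \<Rightarrow> 'a set) \<Rightarrow> (nat \<Rightarrow> nat \<Rightarrow> mat \<Rightarrow> 'a \<Rightarrow> 'a) \<Rightarrow> bool" where
  "presheaf p Xo Xa \<longleftrightarrow>
     (\<forall>m n f x. is_mor p m n f \<and> x \<in> Xo n \<longrightarrow> Xa m n f x \<in> Xo m) \<and>
     (\<forall>n x. x \<in> Xo n \<longrightarrow> Xa n n (mat_id n) x = x) \<and>
     (\<forall>l m n f g x. is_mor p l m f \<and> is_mor p m n g \<and> x \<in> Xo n \<longrightarrow>
        Xa l n (mat_comp p m g f) x = Xa l m f (Xa m n g x))"

definition nat_trans ::
  "nat \<Rightarrow> (nat \<Rightarrow> 'a set) \<Rightarrow> (nat \<Rightarrow> nat \<Rightarrow> mat \<Rightarrow> 'a \<Rightarrow> 'a) \<Rightarrow>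
   (nat \<Rightarrow> 'b set) \<Rightarrow> (nat \<Rightarrow> nat \<Rightarrow> mat \<Rightarrow> 'b \<Rightarrow> 'b) \<Rightarrow> (nat \<Rightarrow> 'a \<Rightarrow> 'b) \<Rightarrow> bool" where
  "nat_trans p Xo Xa Yo Ya \<eta> \<longleftrightarrow>
     (\<forall>n x. x \<in> Xo n \<longrightarrow> \<eta> n x \<in> Yo n) \<and>
     (\<forall>m n f x. is_mor p m n f \<and> x \<in> Xo n \<longrightarrow> \<eta> m (Xa m n f x) = Ya m n f (\<eta> n x))"

(* Hom(X,Y): natural transformations, taken extensional (undefined off the carriers) *)
definition Hom ::
  "nat \<Rightarrow> (nat \<Rightarrow> 'a set) \<Rightarrow> (nat \<Rightarrow> nat \<Rightarrow> mat \<Rightarrow> 'a \<Rightarrow> 'a) \<Rightarrow>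
   (nat \<Rightarrow> 'b set) \<Rightarrow> (nat \<Rightarrow> nat \<Rightarrow> mat \<Rightarrow> 'b \<Rightarrow> 'b) \<Rightarrow> (nat \<Rightarrow> 'a \<Rightarrow> 'b) set" where
  "Hom p Xo Xa Yo Ya =
     {\<eta>. nat_trans p Xo Xa Yo Ya \<eta> \<and> (\<forall>n x. x \<notin> Xo n \<longrightarrow> \<eta> n x = undefined)}"

(* F_p-vector space on carrier V; scalars are represented by {0..<p} *)
definition vspace :: "nat \<Rightarrow> 'v set \<Rightarrow> ('v \<Rightarrow> 'v \<Rightarrow> 'v) \<Rightarrow> 'v \<Rightarrow> (nat \<Rightarrow> 'v \<Rightarrow> 'v) \<Rightarrow> bool" where
  "vspace p V add z sm \<longleftrightarrow>
     z \<in> V \<and> (\<forall>x\<in>V. \<forall>y\<in>V. add x y \<in> V) \<and> (\<forall>a<p. \<forall>x\<in>V. sm a x \<in> V) \<and>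
     (\<forall>x\<in>V. \<forall>y\<in>V. \<forall>w\<in>V. add (add x y) w = add x (add y w)) \<and>
     (\<forall>x\<in>V. \<forall>y\<in>V. add x y = add y x) \<and>
     (\<forall>x\<in>V. add z x = x) \<and>
     (\<forall>x\<in>V. \<exists>y\<in>V. add x y = z) \<and>
     (\<forall>a<p. \<forall>x\<in>V. \<forall>y\<in>V. sm a (add x y) = add (sm a x) (sm a y)) \<and>
     (\<forall>a<p. \<forall>b<p. \<forall>x\<in>V. sm ((a + b) mod p) x = add (sm a x) (sm b x)) \<and>
     (\<forall>a<p. \<forall>b<p. \<forall>x\<in>V. sm ((a * b) mod p) x = sm a (sm b x)) \<and>
     (\<forall>x\<in>V. sm 1 x = x)"

definition vs_presheaf ::
  "nat \<Rightarrow> (nat \<Rightarrow> 'v set) \<Rightarrow> (nat \<Rightarrow> nat \<Rightarrow> mat \<Rightarrow> 'v \<Rightarrow> 'v) \<Rightarrow>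
   ('v \<Rightarrow> 'v \<Rightarrow> 'v) \<Rightarrow> (nat \<Rightarrow> 'v) \<Rightarrow> (nat \<Rightarrow> 'v \<Rightarrow> 'v) \<Rightarrow> bool" where
  "vs_presheaf p Fo Fa add z sm \<longleftrightarrow>
     presheaf p Fo Fa \<and> (\<forall>n. vspace p (Fo n) add (z n) sm) \<and>
     (\<forall>m n f. is_mor p m n f \<longrightarrow>
        (\<forall>x\<in>Fo n. \<forall>y\<in>Fo n. Fa m n f (add x y) = add (Fa m n f x) (Fa m n f y)) \<and>
        (\<forall>a<p. \<forall>x\<in>Fo n. Fa m n f (sm a x) = sm a (Fa m n f x)))"

definition subfunctor ::
  "nat \<Rightarrow> (nat \<Rightarrow> 'v set) \<Rightarrow> (nat \<Rightarrow> nat \<Rightarrow> mat \<Rightarrow> 'v \<Rightarrow> 'v) \<Rightarrow>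
   ('v \<Rightarrow> 'v \<Rightarrow> 'v) \<Rightarrow> (nat \<Rightarrow> 'v) \<Rightarrow> (nat \<Rightarrow> 'v \<Rightarrow> 'v) \<Rightarrow> (nat \<Rightarrow> 'v set) \<Rightarrow> bool" where
  "subfunctor p Fo Fa add z sm G \<longleftrightarrow>
     (\<forall>n. G n \<subseteq> Fo n \<and> z n \<in> G n \<and> (\<forall>x\<in>G n. \<forall>y\<in>G n. add x y \<in> G n) \<and>
          (\<forall>a<p. \<forall>x\<in>G n. sm a x \<in> G n)) \<and>
     (\<forall>m n f x. is_mor p m n f \<and> x \<in> G n \<longrightarrow> Fa m n f x \<in> G m)"

(* finite composition series 0 = G_0 < G_1 < ... < G_k = F with simple quotients,
   i.e. no subfunctor strictly between consecutive terms *)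
definition has_comp_series ::
  "nat \<Rightarrow> (nat \<Rightarrow> 'v set) \<Rightarrow> (nat \<Rightarrow> nat \<Rightarrow> mat \<Rightarrow> 'v \<Rightarrow> 'v) \<Rightarrow>
   ('v \<Rightarrow> 'v \<Rightarrow> 'v) \<Rightarrow> (nat \<Rightarrow> 'v) \<Rightarrow> (nat \<Rightarrow> 'v \<Rightarrow> 'v) \<Rightarrow> bool" where
  "has_comp_series p Fo Fa add z sm \<longleftrightarrow>
     (\<exists>Gs. Gs \<noteq> [] \<and> (\<forall>G\<in>set Gs. subfunctor p Fo Fa add z sm G) \<and>
        hd Gs = (\<lambda>n. {z n}) \<and> last Gs = Fo \<and>
        (\<forall>i. Suc i < length Gs \<longrightarrow> Gs ! i < Gs ! Suc i \<and>
           \<not> (\<exists>H. subfunctor p Fo Fa add z sm H \<and> Gs ! i < H \<and> H < Gs ! Suc i)))"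

(* Y is finite: monomorphism of presheaves of sets Y -> F_Y with F_Y a vector-space
   valued functor with a finite composition series (F_Y valued in type 'v) *)
definition finite_presheaf ::
  "'v itself \<Rightarrow> nat \<Rightarrow> (nat \<Rightarrow> 'b set) \<Rightarrow> (nat \<Rightarrow> nat \<Rightarrow> mat \<Rightarrow> 'b \<Rightarrow> 'b) \<Rightarrow> bool" where
  "finite_presheaf (_ :: 'v itself) p Yo Ya \<longleftrightarrow>
     (\<exists>(Fo :: nat \<Rightarrow> 'v set) Fa add z sm \<iota>.
        vs_presheaf p Fo Fa add z sm \<and> has_comp_series p Fo Fa add z sm \<and>
        nat_trans p Yo Ya Fo Fa \<iota> \<and> (\<forall>n. inj_on (\<iota> n) (Yo n)))"

end

theory Submission
  imports Defs "HOL-Library.FuncSet"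
begin

text \<open>
  Let \<open>Y \<hookrightarrow> F\<close> with \<open>F\<close> a vector-space valued functor with a composition series.
  Induction along the series shows that \<open>F\<close> is pointwise finite (each step adds the
  subfunctor generated by one vector, which is spanned by finitely many vectors in each
  degree) and that there is a degree \<open>D\<close> such that a vector of \<open>F(V)\<close> vanishes as soon as
  all its images in \<open>F(W)\<close>, \<open>dim W \<le> D\<close>, vanish. For the latter, in a simple extension
  \<open>G \<subset> G'\<close> pick \<open>x \<in> G'(n) - G(n)\<close>. The vectors of \<open>G'\<close> killed in degrees \<open>\<le> n\<close> vanish
  in degree \<open>n\<close>, so together with \<open>G\<close> they generate a subfunctor missing \<open>x\<close>, which must
  be \<open>G\<close>; if \<open>G\<close> works with bound \<open>d\<close>, then \<open>G'\<close> works with \<open>max n d\<close>. Consequently a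
  natural transformation \<open>X \<rightarrow> Y\<close> is determined by its finitely many components in
  degrees \<open>\<le> D\<close>, each of which is a map between finite sets.
\<close>

lemma
  assumes "vspace p V add z sm"
  shows vspace_zero_mem: "z \<in> V"
    and vspace_add_closed: "x \<in> V \<Longrightarrow> y \<in> V \<Longrightarrow> add x y \<in> V"
    and vspace_smult_closed: "a < p \<Longrightarrow> x \<in> V \<Longrightarrow> sm a x \<in> V"
    and vspace_add_assoc: "x \<in> V \<Longrightarrow> y \<in> V \<Longrightarrow> w \<in> V \<Longrightarrow> add (add x y) w = add x (add y w)"
    and vspace_add_commute: "x \<in> V \<Longrightarrow> y \<in> V \<Longrightarrow> add x y = add y x"
    and vspace_add_zero_left: "x \<in> V \<Longrightarrow> add z x = x"
    and vspace_neg: "x \<in> V \<Longrightarrow> \<exists>y\<in>V. add x y = z"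
    and vspace_smult_add: "a < p \<Longrightarrow> x \<in> V \<Longrightarrow> y \<in> V \<Longrightarrow> sm a (add x y) = add (sm a x) (sm a y)"
    and vspace_add_smult: "a < p \<Longrightarrow> b < p \<Longrightarrow> x \<in> V \<Longrightarrow> sm ((a + b) mod p) x = add (sm a x) (sm b x)"
    and vspace_mult_smult: "a < p \<Longrightarrow> b < p \<Longrightarrow> x \<in> V \<Longrightarrow> sm ((a * b) mod p) x = sm a (sm b x)"
  using assms unfolding vspace_def by - (elim conjE, blast)+

lemma vspace_smult_one: "vspace p V add z sm \<Longrightarrow> x \<in> V \<Longrightarrow> sm 1 x = x"
  unfolding vspace_def by auto

lemma vspace_add_zero_right: "vspace p V add z sm \<Longrightarrow> x \<in> V \<Longrightarrow> add x z = x"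
  by (metis vspace_add_commute vspace_add_zero_left vspace_zero_mem)

lemma vspace_idem_zero:
  assumes V: "vspace p V add z sm" and x: "x \<in> V" and idem: "add x x = x"
  shows "x = z"
proof -
  obtain y where y: "y \<in> V" "add x y = z" using vspace_neg[OF V x] by blast
  have "z = add (add x x) y" using idem y by simp
  also have "\<dots> = add x (add x y)" using vspace_add_assoc[OF V x x y(1)] .
  also have "\<dots> = x" using y vspace_add_zero_right[OF V x] by simp
  finally show ?thesis by simp
qed

lemma vspace_smult_zero:
  assumes V: "vspace p V add z sm" and a: "a < p"
  shows "sm a z = z"
proof -
  have z: "z \<in> V" using vspace_zero_mem[OF V] .
  have "sm a z = add (sm a z) (sm a z)"
    using vspace_smult_add[OF V a z z] vspace_add_zero_left[OF V z] by simp
  then show ?thesis using vspace_idem_zero[OF V vspace_smult_closed[OF V a z]] by simp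
qed

lemma vspace_zero_smult:
  assumes V: "vspace p V add z sm" and p: "0 < p" and x: "x \<in> V"
  shows "sm 0 x = z"
proof -
  have "sm 0 x = add (sm 0 x) (sm 0 x)" using vspace_add_smult[OF V p p x] by simp
  then show ?thesis using vspace_idem_zero[OF V vspace_smult_closed[OF V p x]] by simp
qed

lemma vspace_add_right_cancel_zero:
  assumes V: "vspace p V add z sm" and "u \<in> V" "v \<in> V" "w \<in> V"
    and "add u w = z" "add v w = z"
  shows "u = v"
proof -
  have "u = add u (add w v)" using assms vspace_add_commute[OF V] vspace_add_zero_right[OF V] by simp
  also have "\<dots> = add (add u w) v" using assms vspace_add_assoc[OF V, of u w v] by simp
  also have "\<dots> = v" using assms vspace_add_zero_left[OF V] by simp
  finally show ?thesis .
qed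

lemma vspace_add_add_swap:
  assumes V: "vspace p V add z sm" and "a \<in> V" "b \<in> V" "c \<in> V" "d \<in> V"
  shows "add (add a b) (add c d) = add (add a c) (add b d)"
  using assms vspace_add_assoc[OF V] vspace_add_commute[OF V] vspace_add_closed[OF V] by metis

inductive_set lin_span :: "nat \<Rightarrow> ('v \<Rightarrow> 'v \<Rightarrow> 'v) \<Rightarrow> 'v \<Rightarrow> (nat \<Rightarrow> 'v \<Rightarrow> 'v) \<Rightarrow> 'v set \<Rightarrow> 'v set"
  for p add z sm T where
  lin_span_zero: "z \<in> lin_span p add z sm T"
| lin_span_base: "x \<in> T \<Longrightarrow> x \<in> lin_span p add z sm T"
| lin_span_add: "x \<in> lin_span p add z sm T \<Longrightarrow> y \<in> lin_span p add z sm T \<Longrightarrow>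
    add x y \<in> lin_span p add z sm T"
| lin_span_smult: "a < p \<Longrightarrow> x \<in> lin_span p add z sm T \<Longrightarrow> sm a x \<in> lin_span p add z sm T"

lemma lin_span_minimal:
  assumes "T \<subseteq> S" "z \<in> S" "\<And>x y. x \<in> S \<Longrightarrow> y \<in> S \<Longrightarrow> add x y \<in> S"
    "\<And>a x. a < p \<Longrightarrow> x \<in> S \<Longrightarrow> sm a x \<in> S"
  shows "lin_span p add z sm T \<subseteq> S"
proof
  fix x assume "x \<in> lin_span p add z sm T"
  then show "x \<in> S" by induction (use assms in auto)
qed

lemma lin_span_subset: "vspace p V add z sm \<Longrightarrow> T \<subseteq> V \<Longrightarrow> lin_span p add z sm T \<subseteq> V"
  by (rule lin_span_minimal) (auto simp: vspace_zero_mem vspace_add_closed vspace_smult_closed)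

lemma lin_span_image:
  assumes V: "vspace p V add z sm" and T: "T \<subseteq> V"
    and L_add: "\<And>x y. x \<in> V \<Longrightarrow> y \<in> V \<Longrightarrow> L (add x y) = add (L x) (L y)"
    and L_smult: "\<And>a x. a < p \<Longrightarrow> x \<in> V \<Longrightarrow> L (sm a x) = sm a (L x)"
    and L_zero: "L z = z'"
  shows "L ` lin_span p add z sm T \<subseteq> lin_span p add z' sm (L ` T)"
proof -
  have "x \<in> lin_span p add z sm T \<Longrightarrow> L x \<in> lin_span p add z' sm (L ` T)" for x
  proof (induction rule: lin_span.induct)
    case (lin_span_add x y)
    then show ?case
      using L_add lin_span_subset[OF V T] by (metis lin_span.lin_span_add subsetD)
  next
    case (lin_span_smult a x)
    then show ?case
      using L_smult lin_span_subset[OF V T] by (metis lin_span.lin_span_smult subsetD)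
  qed (auto simp: L_zero intro: lin_span.intros)
  then show ?thesis by blast
qed

lemma lin_span_insert_subset:
  assumes V: "vspace p V add z sm" and p: "1 < p" and v: "v \<in> V" and T: "T \<subseteq> V"
  shows "lin_span p add z sm (insert v T)
           \<subseteq> (\<lambda>(a, w). add (sm a v) w) ` ({..<p} \<times> lin_span p add z sm T)"
    (is "_ \<subseteq> ?C")
proof -
  have S: "w \<in> V" if "w \<in> lin_span p add z sm T" for w
    using lin_span_subset[OF V T] that by blast
  have comb: "add (sm a v) w \<in> ?C" if "a < p" "w \<in> lin_span p add z sm T" for a w
    using that by (intro image_eqI[where x = "(a, w)"]) auto
  have shift: "add (sm 0 v) w = w" if "w \<in> V" for w
    using vspace_zero_smult[OF V _ v] vspace_add_zero_left[OF V that] p by simp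
  show ?thesis
  proof (rule lin_span_minimal)
    show "z \<in> ?C"
      using comb[OF _ lin_span_zero, of 0] shift[OF vspace_zero_mem[OF V]] p by simp
    have "v = add (sm 1 v) z"
      using vspace_smult_one[OF V v] vspace_add_zero_right[OF V v] by simp
    then have "v \<in> ?C" using comb[OF _ lin_span_zero, of 1] p by simp
    moreover have "t \<in> ?C" if "t \<in> T" for t
      using comb[OF _ lin_span_base[OF that], of 0] shift[OF subsetD[OF T that]] p by simp
    ultimately show "insert v T \<subseteq> ?C" by blast
  next
    fix x y assume "x \<in> ?C" "y \<in> ?C"
    then obtain a w b w' where x: "x = add (sm a v) w" "a < p" "w \<in> lin_span p add z sm T"
      and y: "y = add (sm b v) w'" "b < p" "w' \<in> lin_span p add z sm T" by auto
    have "add x y = add (add (sm a v) (sm b v)) (add w w')"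
      using x y vspace_add_add_swap[OF V, of "sm a v" w "sm b v" w']
        vspace_smult_closed[OF V _ v] S by simp
    also have "\<dots> = add (sm ((a + b) mod p) v) (add w w')"
      using vspace_add_smult[OF V x(2) y(2) v] by simp
    finally show "add x y \<in> ?C"
      using comb[OF _ lin_span_add[OF x(3) y(3)], of "(a + b) mod p"] p by simp
  next
    fix c x assume c: "c < p" and "x \<in> ?C"
    then obtain a w where x: "x = add (sm a v) w" "a < p" "w \<in> lin_span p add z sm T" by auto
    have "sm c x = add (sm c (sm a v)) (sm c w)"
      using x vspace_smult_add[OF V c] vspace_smult_closed[OF V _ v] S by simp
    also have "\<dots> = add (sm ((c * a) mod p) v) (sm c w)"
      using vspace_mult_smult[OF V c x(2) v] by simp
    finally show "sm c x \<in> ?C"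
      using comb[OF _ lin_span_smult[OF c x(3)], of "(c * a) mod p"] p by simp
  qed
qed

lemma finite_lin_span:
  assumes V: "vspace p V add z sm" and p: "1 < p" and "finite T" "T \<subseteq> V"
  shows "finite (lin_span p add z sm T)"
  using assms(3,4)
proof (induction rule: finite_induct)
  case empty
  have "lin_span p add z sm {} \<subseteq> {z}"
    by (rule lin_span_minimal) (auto simp: vspace_add_zero_left[OF V] vspace_zero_mem[OF V]
        vspace_smult_zero[OF V])
  then show ?case using finite_subset by blast
next
  case (insert v T)
  then show ?case
    using lin_span_insert_subset[OF V p, of v T] by (auto intro: finite_subset)
qed

lemma finite_mors: "finite {f. is_mor p m n f}"
proof -
  let ?extend = "\<lambda>(g :: nat \<times> nat \<Rightarrow> nat) i j. if i < n \<and> j < m then g (i, j) else 0"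
  have "{f. is_mor p m n f} \<subseteq> ?extend ` PiE ({..<n} \<times> {..<m}) (\<lambda>_. {..<p})"
  proof
    fix f assume "f \<in> {f. is_mor p m n f}"
    then have f: "is_mor p m n f" by simp
    let ?g = "\<lambda>(i, j) \<in> {..<n} \<times> {..<m}. f i j"
    have "?g \<in> PiE ({..<n} \<times> {..<m}) (\<lambda>_. {..<p})" using f by (auto simp: is_mor_def)
    moreover have "f = ?extend ?g" using f by (auto simp: is_mor_def fun_eq_iff)
    ultimately show "f \<in> ?extend ` PiE ({..<n} \<times> {..<m}) (\<lambda>_. {..<p})" by blast
  qed
  then show ?thesis by (rule finite_subset) (intro finite_imageI finite_PiE; simp)
qed

lemma is_mor_mat_comp: "is_mor p l m f \<Longrightarrow> is_mor p m n g \<Longrightarrow> 0 < p \<Longrightarrow> is_mor p l n (mat_comp p m g f)"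
  unfolding is_mor_def mat_comp_def by auto

lemma is_mor_mat_id: "1 < p \<Longrightarrow> is_mor p n n (mat_id n)"
  unfolding is_mor_def mat_id_def by auto

locale linear_presheaf =
  fixes p :: nat and Fo :: "nat \<Rightarrow> 'v set" and Fa :: "nat \<Rightarrow> nat \<Rightarrow> mat \<Rightarrow> 'v \<Rightarrow> 'v"
    and add :: "'v \<Rightarrow> 'v \<Rightarrow> 'v" and z :: "nat \<Rightarrow> 'v" and sm :: "nat \<Rightarrow> 'v \<Rightarrow> 'v"
  assumes vs_presheaf: "vs_presheaf p Fo Fa add z sm" and p_gt_1: "1 < p"
begin

lemma vspace_Fo: "vspace p (Fo n) add (z n) sm"
  using vs_presheaf unfolding vs_presheaf_def by blast

lemma Fa_closed: "is_mor p m n f \<Longrightarrow> x \<in> Fo n \<Longrightarrow> Fa m n f x \<in> Fo m"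
  using vs_presheaf unfolding vs_presheaf_def presheaf_def by blast

lemma Fa_add:
  "is_mor p m n f \<Longrightarrow> x \<in> Fo n \<Longrightarrow> y \<in> Fo n \<Longrightarrow> Fa m n f (add x y) = add (Fa m n f x) (Fa m n f y)"
  using vs_presheaf unfolding vs_presheaf_def by blast

lemma Fa_smult: "is_mor p m n f \<Longrightarrow> a < p \<Longrightarrow> x \<in> Fo n \<Longrightarrow> Fa m n f (sm a x) = sm a (Fa m n f x)"
  using vs_presheaf unfolding vs_presheaf_def by blast

lemma Fa_id: "x \<in> Fo n \<Longrightarrow> Fa n n (mat_id n) x = x"
  using vs_presheaf unfolding vs_presheaf_def presheaf_def by blast

lemma Fa_comp:
  "is_mor p l m f \<Longrightarrow> is_mor p m n g \<Longrightarrow> x \<in> Fo n \<Longrightarrow>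
     Fa l n (mat_comp p m g f) x = Fa l m f (Fa m n g x)"
  using vs_presheaf unfolding vs_presheaf_def presheaf_def by blast

lemma Fa_zero:
  assumes f: "is_mor p m n f"
  shows "Fa m n f (z n) = z m"
proof -
  have zn: "z n \<in> Fo n" using vspace_zero_mem[OF vspace_Fo] .
  have "Fa m n f (z n) = add (Fa m n f (z n)) (Fa m n f (z n))"
    using Fa_add[OF f zn zn] vspace_add_zero_left[OF vspace_Fo zn] by simp
  then show ?thesis using vspace_idem_zero[OF vspace_Fo Fa_closed[OF f zn]] by simp
qed

abbreviation sub :: "(nat \<Rightarrow> 'v set) \<Rightarrow> bool" where
  "sub G \<equiv> subfunctor p Fo Fa add z sm G"

lemma subfunctorD:
  assumes "sub G"
  shows "G n \<subseteq> Fo n" "z n \<in> G n" "x \<in> G n \<Longrightarrow> y \<in> G n \<Longrightarrow> add x y \<in> G n"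
    "a < p \<Longrightarrow> x \<in> G n \<Longrightarrow> sm a x \<in> G n" "is_mor p m n f \<Longrightarrow> x \<in> G n \<Longrightarrow> Fa m n f x \<in> G m"
  using assms unfolding subfunctor_def by blast+

lemma subfunctor_inter: "sub A \<Longrightarrow> sub B \<Longrightarrow> sub (\<lambda>n. A n \<inter> B n)"
  unfolding subfunctor_def by blast

definition subsum :: "(nat \<Rightarrow> 'v set) \<Rightarrow> (nat \<Rightarrow> 'v set) \<Rightarrow> nat \<Rightarrow> 'v set" where
  "subsum A B n = {add a b | a b. a \<in> A n \<and> b \<in> B n}"

lemma subfunctor_subsum:
  assumes A: "sub A" and B: "sub B"
  shows "sub (subsum A B)"
  unfolding subfunctor_def
proof (intro conjI allI impI ballI)
  note V = vspace_Fo and AF = subfunctorD(1)[OF A] and BF = subfunctorD(1)[OF B]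
  fix n
  show "subsum A B n \<subseteq> Fo n" using AF BF vspace_add_closed[OF V] unfolding subsum_def by blast
  have "z n = add (z n) (z n)" using vspace_add_zero_left[OF V vspace_zero_mem[OF V]] by simp
  then show "z n \<in> subsum A B n"
    unfolding subsum_def using subfunctorD(2)[OF A] subfunctorD(2)[OF B] by blast
  fix x y assume "x \<in> subsum A B n" "y \<in> subsum A B n"
  then obtain a b a' b' where "x = add a b" "a \<in> A n" "b \<in> B n" "y = add a' b'" "a' \<in> A n" "b' \<in> B n"
    unfolding subsum_def by blast
  moreover have "add x y = add (add a a') (add b b')"
    using calculation vspace_add_add_swap[OF V] AF BF by blast
  ultimately show "add x y \<in> subsum A B n"
    unfolding subsum_def using subfunctorD(3)[OF A] subfunctorD(3)[OF B] by blast
next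
  fix n a x assume a: "a < p" and "x \<in> subsum A B n"
  then obtain u v where uv: "x = add u v" "u \<in> A n" "v \<in> B n" unfolding subsum_def by blast
  then have "sm a x = add (sm a u) (sm a v)"
    using vspace_smult_add[OF vspace_Fo a] subfunctorD(1)[OF A] subfunctorD(1)[OF B] by blast
  then show "sm a x \<in> subsum A B n"
    unfolding subsum_def using uv a subfunctorD(4)[OF A] subfunctorD(4)[OF B] by blast
next
  fix m n f x assume h: "is_mor p m n f \<and> x \<in> subsum A B n"
  then obtain u v where uv: "x = add u v" "u \<in> A n" "v \<in> B n" unfolding subsum_def by blast
  then have "Fa m n f x = add (Fa m n f u) (Fa m n f v)"
    using h Fa_add subfunctorD(1)[OF A] subfunctorD(1)[OF B] by blast
  then show "Fa m n f x \<in> subsum A B m"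
    unfolding subsum_def using uv h subfunctorD(5)[OF A] subfunctorD(5)[OF B] by blast
qed

lemma subsum_upper_left:
  assumes A: "sub A" and B: "sub B"
  shows "A \<le> subsum A B"
proof (intro le_funI subsetI)
  fix n a assume a: "a \<in> A n"
  have "a = add a (z n)" using vspace_add_zero_right[OF vspace_Fo subsetD[OF subfunctorD(1)[OF A] a]] by simp
  then show "a \<in> subsum A B n" unfolding subsum_def using a subfunctorD(2)[OF B] by blast
qed

lemma subsum_upper_right:
  assumes A: "sub A" and B: "sub B"
  shows "B \<le> subsum A B"
proof (intro le_funI subsetI)
  fix n b assume b: "b \<in> B n"
  have "b = add (z n) b" using vspace_add_zero_left[OF vspace_Fo subsetD[OF subfunctorD(1)[OF B] b]] by simp
  then show "b \<in> subsum A B n" unfolding subsum_def using b subfunctorD(2)[OF A] by blast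
qed

lemma subsum_least: "sub C \<Longrightarrow> A \<le> C \<Longrightarrow> B \<le> C \<Longrightarrow> subsum A B \<le> C"
  unfolding le_fun_def subsum_def using subfunctorD(3) by blast

definition generated :: "'v \<Rightarrow> nat \<Rightarrow> nat \<Rightarrow> 'v set" where
  "generated x n0 m = lin_span p add (z m) sm ((\<lambda>f. Fa m n0 f x) ` {f. is_mor p m n0 f})"

lemma generators_subset: "x \<in> Fo n0 \<Longrightarrow> (\<lambda>f. Fa m n0 f x) ` {f. is_mor p m n0 f} \<subseteq> Fo m"
  using Fa_closed by blast

lemma finite_generated: "x \<in> Fo n0 \<Longrightarrow> finite (generated x n0 m)"
  unfolding generated_def
  by (intro finite_lin_span[OF vspace_Fo p_gt_1] finite_imageI finite_mors generators_subset)

lemma mem_generated: "x \<in> Fo n0 \<Longrightarrow> x \<in> generated x n0 n0"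
  unfolding generated_def using is_mor_mat_id[OF p_gt_1] Fa_id[of x n0]
  by (intro lin_span_base) (auto intro!: image_eqI[where x = "mat_id n0"])

lemma generated_least: "sub G \<Longrightarrow> x \<in> G n0 \<Longrightarrow> generated x n0 \<le> G"
  unfolding generated_def le_fun_def
  by (intro allI lin_span_minimal) (auto dest: subfunctorD)

lemma subfunctor_generated:
  assumes x: "x \<in> Fo n0"
  shows "sub (generated x n0)"
  unfolding subfunctor_def
proof (intro conjI allI impI ballI)
  fix n
  show "generated x n0 n \<subseteq> Fo n"
    unfolding generated_def using lin_span_subset[OF vspace_Fo generators_subset[OF x]] .
  show "z n \<in> generated x n0 n" unfolding generated_def by (rule lin_span_zero)
  show "add u v \<in> generated x n0 n" if "u \<in> generated x n0 n" "v \<in> generated x n0 n" for u v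
    using that unfolding generated_def by (rule lin_span_add)
  show "sm a u \<in> generated x n0 n" if "a < p" "u \<in> generated x n0 n" for a u
    using that unfolding generated_def by (rule lin_span_smult)
next
  fix m n g u assume "is_mor p m n g \<and> u \<in> generated x n0 n"
  then have g: "is_mor p m n g" and u: "u \<in> generated x n0 n" by auto
  have "Fa m n g ` generated x n0 n
          \<subseteq> lin_span p add (z m) sm (Fa m n g ` (\<lambda>f. Fa n n0 f x) ` {f. is_mor p n n0 f})"
    unfolding generated_def
    by (rule lin_span_image[OF vspace_Fo generators_subset[OF x]])
      (auto simp: Fa_add[OF g] Fa_smult[OF g] Fa_zero[OF g])
  also have "\<dots> \<subseteq> generated x n0 m"
  proof (rule lin_span_minimal)
    show "Fa m n g ` (\<lambda>f. Fa n n0 f x) ` {f. is_mor p n n0 f} \<subseteq> generated x n0 m"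
    proof clarify
      fix f assume f: "is_mor p n n0 f"
      have "Fa m n g (Fa n n0 f x) = Fa m n0 (mat_comp p n f g) x" using Fa_comp[OF g f x] by simp
      moreover have "is_mor p m n0 (mat_comp p n f g)" using is_mor_mat_comp[OF g f] p_gt_1 by simp
      ultimately show "Fa m n g (Fa n n0 f x) \<in> generated x n0 m"
        unfolding generated_def by (auto intro: lin_span_base)
    qed
  qed (auto simp: generated_def intro: lin_span.intros)
  finally show "Fa m n g u \<in> generated x n0 m" using u by blast
qed

definition low_kernel :: "nat \<Rightarrow> nat \<Rightarrow> 'v set" where
  "low_kernel d n = {y \<in> Fo n. \<forall>e\<le>d. \<forall>f. is_mor p e n f \<longrightarrow> Fa e n f y = z e}"

lemma subfunctor_low_kernel: "sub (low_kernel d)"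
  unfolding subfunctor_def
proof (intro conjI allI impI ballI)
  fix n
  show "low_kernel d n \<subseteq> Fo n" unfolding low_kernel_def by blast
  show "z n \<in> low_kernel d n" unfolding low_kernel_def using Fa_zero vspace_zero_mem[OF vspace_Fo] by blast
  show "add x y \<in> low_kernel d n" if "x \<in> low_kernel d n" "y \<in> low_kernel d n" for x y
    using that Fa_add vspace_add_closed[OF vspace_Fo] vspace_add_zero_left[OF vspace_Fo vspace_zero_mem[OF vspace_Fo]]
    unfolding low_kernel_def by auto
  show "sm a x \<in> low_kernel d n" if "a < p" "x \<in> low_kernel d n" for a x
    using that Fa_smult vspace_smult_closed[OF vspace_Fo] vspace_smult_zero[OF vspace_Fo]
    unfolding low_kernel_def by auto
next
  fix m n g x assume "is_mor p m n g \<and> x \<in> low_kernel d n"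
  then have g: "is_mor p m n g" and x: "x \<in> Fo n" "\<forall>e\<le>d. \<forall>f. is_mor p e n f \<longrightarrow> Fa e n f x = z e"
    unfolding low_kernel_def by auto
  have "Fa e m f (Fa m n g x) = z e" if "e \<le> d" "is_mor p e m f" for e f
    using Fa_comp[OF that(2) g x(1)] x(2) that is_mor_mat_comp[OF that(2) g] p_gt_1 by simp
  then show "Fa m n g x \<in> low_kernel d m" unfolding low_kernel_def using Fa_closed[OF g x(1)] by blast
qed

lemma low_kernel_antimono: "d \<le> d' \<Longrightarrow> low_kernel d' n \<subseteq> low_kernel d n"
  unfolding low_kernel_def by auto

lemma low_kernel_trivial: "n \<le> d \<Longrightarrow> y \<in> low_kernel d n \<Longrightarrow> y = z n"
  unfolding low_kernel_def using is_mor_mat_id[OF p_gt_1] Fa_id by fastforce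

definition covers :: "(nat \<Rightarrow> 'v set) \<Rightarrow> (nat \<Rightarrow> 'v set) \<Rightarrow> bool" where
  "covers G G' \<longleftrightarrow> sub G \<and> sub G' \<and> G < G' \<and> \<not> (\<exists>H. sub H \<and> G < H \<and> H < G')"

lemma covers_cases: "covers G G' \<Longrightarrow> sub H \<Longrightarrow> G \<le> H \<Longrightarrow> H \<le> G' \<Longrightarrow> H = G \<or> H = G'"
  unfolding covers_def by (auto simp: less_le)

lemma covers_witness:
  assumes "covers G G'"
  obtains n x where "x \<in> G' n" "x \<notin> G n"
proof -
  have "G \<le> G'" "G \<noteq> G'" using assms unfolding covers_def by auto
  then show ?thesis using that by (auto simp: le_fun_def fun_eq_iff)
qed

lemma comp_series_induct:
  assumes "has_comp_series p Fo Fa add z sm"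
    and base: "P (\<lambda>n. {z n})" and step: "\<And>G G'. covers G G' \<Longrightarrow> P G \<Longrightarrow> P G'"
  shows "P Fo"
proof -
  obtain Gs where ne: "Gs \<noteq> []" and hd: "hd Gs = (\<lambda>n. {z n})"
    and last: "last Gs = Fo"
    and cov: "\<And>i. Suc i < length Gs \<Longrightarrow> covers (Gs ! i) (Gs ! Suc i)"
    using assms(1) unfolding has_comp_series_def covers_def by (metis Suc_lessD nth_mem)
  have "i < length Gs \<Longrightarrow> P (Gs ! i)" for i
    by (induction i) (use ne hd base step cov in \<open>auto simp: hd_conv_nth\<close>)
  then have "P (Gs ! (length Gs - 1))" using ne by simp
  then show ?thesis using ne last by (simp add: last_conv_nth)
qed

lemma covers_finite:
  assumes cov: "covers G G'" and fin: "\<And>n. finite (G n)"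
  shows "finite (G' n)"
proof -
  obtain n0 x where x: "x \<in> G' n0" "x \<notin> G n0" using covers_witness[OF cov] .
  have G: "sub G" and G': "sub G'" using cov unfolding covers_def by auto
  have xF: "x \<in> Fo n0" using subfunctorD(1)[OF G'] x(1) by blast
  let ?H = "subsum G (generated x n0)"
  have H: "sub ?H" using subfunctor_subsum[OF G subfunctor_generated[OF xF]] .
  have "G \<le> ?H" using subsum_upper_left[OF G subfunctor_generated[OF xF]] .
  moreover have "?H \<le> G'"
    using cov subsum_least[OF G' _ generated_least[OF G' x(1)]] unfolding covers_def by (simp add: less_le)
  moreover have "x \<in> ?H n0"
    using subsum_upper_right[OF G subfunctor_generated[OF xF]] mem_generated[OF xF]
    by (auto simp: le_fun_def)
  then have "?H \<noteq> G" using x(2) by auto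
  ultimately have "G' = ?H" using covers_cases[OF cov H] by metis
  then have "G' n \<subseteq> (\<lambda>(a, b). add a b) ` (G n \<times> generated x n0 n)" unfolding subsum_def by auto
  then show ?thesis
    using fin finite_generated[OF xF] by (meson finite_SigmaI finite_imageI finite_subset)
qed

lemma covers_low_kernel:
  assumes cov: "covers G G'" and d: "\<And>n. G n \<inter> low_kernel d n \<subseteq> {z n}"
  obtains d' where "\<And>n. G' n \<inter> low_kernel d' n \<subseteq> {z n}"
proof -
  obtain n0 x where x: "x \<in> G' n0" "x \<notin> G n0" using covers_witness[OF cov] .
  have G: "sub G" and G': "sub G'" using cov unfolding covers_def by auto
  let ?K = "\<lambda>m. G' m \<inter> low_kernel n0 m"
  let ?H = "subsum G ?K"
  have K: "sub ?K" using subfunctor_inter[OF G' subfunctor_low_kernel] .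
  have H: "sub ?H" using subfunctor_subsum[OF G K] .
  have "G \<le> ?H" using subsum_upper_left[OF G K] .
  moreover have "?H \<le> G'"
    using cov subsum_least[OF G' _ le_funI[of ?K G']] unfolding covers_def by (simp add: less_le)
  moreover have "x \<notin> ?H n0"
  proof
    assume "x \<in> ?H n0"
    then obtain g k where gk: "x = add g k" "g \<in> G n0" "k \<in> low_kernel n0 n0"
      unfolding subsum_def by blast
    then have "x = g"
      using low_kernel_trivial[OF le_refl gk(3)] vspace_add_zero_right[OF vspace_Fo]
        subfunctorD(1)[OF G] by auto
    then show False using x gk by simp
  qed
  then have "?H \<noteq> G'" using x(1) by auto
  ultimately have HG: "?H = G" using covers_cases[OF cov H] by metis
  show ?thesis
  proof
    fix m
    show "G' m \<inter> low_kernel (max n0 d) m \<subseteq> {z m}"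
    proof
      fix y assume y: "y \<in> G' m \<inter> low_kernel (max n0 d) m"
      then have "y \<in> ?K m" using low_kernel_antimono[of n0 "max n0 d" m] by auto
      then have "y \<in> G m" using subsum_upper_right[OF G K] HG by (auto simp: le_fun_def)
      moreover have "y \<in> low_kernel d m" using y low_kernel_antimono[of d "max n0 d" m] by auto
      ultimately show "y \<in> {z m}" using d by blast
    qed
  qed
qed

lemma finite_Fo: "has_comp_series p Fo Fa add z sm \<Longrightarrow> finite (Fo n)"
  using comp_series_induct[where P = "\<lambda>G. \<forall>n. finite (G n)"] covers_finite by blast

lemma low_kernel_vanishes:
  assumes "has_comp_series p Fo Fa add z sm"
  obtains D where "\<And>n. Fo n \<inter> low_kernel D n \<subseteq> {z n}"
proof -
  have "\<exists>D. \<forall>n. Fo n \<inter> low_kernel D n \<subseteq> {z n}"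
    using comp_series_induct[OF assms, where P = "\<lambda>G. \<exists>D. \<forall>n. G n \<inter> low_kernel D n \<subseteq> {z n}"]
      covers_low_kernel by (metis Int_lower1)
  then show ?thesis using that by blast
qed

lemma eq_if_low_images_eq:
  assumes D: "Fo n \<inter> low_kernel D n \<subseteq> {z n}" and u: "u \<in> Fo n" and v: "v \<in> Fo n"
    and images: "\<And>e f. e \<le> D \<Longrightarrow> is_mor p e n f \<Longrightarrow> Fa e n f u = Fa e n f v"
  shows "u = v"
proof -
  obtain w where w: "w \<in> Fo n" "add v w = z n" using vspace_neg[OF vspace_Fo v] by blast
  have uw: "add u w \<in> Fo n" using vspace_add_closed[OF vspace_Fo u w(1)] .
  have "Fa e n f (add u w) = z e" if "e \<le> D" "is_mor p e n f" for e f
    using Fa_add[OF that(2) u w(1)] Fa_add[OF that(2) v w(1)] images[OF that] w(2) Fa_zero[OF that(2)]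
    by simp
  then have "add u w \<in> low_kernel D n" unfolding low_kernel_def using uw by blast
  then have "add u w = z n" using D uw by blast
  then show ?thesis using vspace_add_right_cancel_zero[OF vspace_Fo u v w(1) _ w(2)] by blast
qed

lemma Hom_eq_if_eq_below:
  assumes D: "\<And>n. Fo n \<inter> low_kernel D n \<subseteq> {z n}"
    and \<iota>: "nat_trans p Yo Ya Fo Fa \<iota>" "\<forall>n. inj_on (\<iota> n) (Yo n)"
    and \<eta>: "\<eta> \<in> Hom p Xo Xa Yo Ya" and \<eta>': "\<eta>' \<in> Hom p Xo Xa Yo Ya"
    and below: "\<And>e. e \<le> D \<Longrightarrow> \<eta> e = \<eta>' e"
  shows "\<eta> = \<eta>'"
proof (intro ext)
  fix n x
  show "\<eta> n x = \<eta>' n x"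
  proof (cases "x \<in> Xo n")
    case False
    then show ?thesis using \<eta> \<eta>' unfolding Hom_def by simp
  next
    case x: True
    have nat: "nat_trans p Xo Xa Yo Ya \<eta>" "nat_trans p Xo Xa Yo Ya \<eta>'"
      using \<eta> \<eta>' unfolding Hom_def by auto
    have y: "\<eta> n x \<in> Yo n" "\<eta>' n x \<in> Yo n" using nat x unfolding nat_trans_def by auto
    have "\<iota> n (\<eta> n x) = \<iota> n (\<eta>' n x)"
    proof (rule eq_if_low_images_eq[OF D])
      show "\<iota> n (\<eta> n x) \<in> Fo n" "\<iota> n (\<eta>' n x) \<in> Fo n" using \<iota>(1) y unfolding nat_trans_def by auto
      fix e f assume e: "e \<le> D" and f: "is_mor p e n f"
      have "Fa e n f (\<iota> n (\<eta> n x)) = \<iota> e (\<eta> e (Xa e n f x))"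
        using \<iota>(1) nat(1) f x y(1) unfolding nat_trans_def by auto
      also have "\<dots> = \<iota> e (\<eta>' e (Xa e n f x))" using below[OF e] by simp
      also have "\<dots> = Fa e n f (\<iota> n (\<eta>' n x))"
        using \<iota>(1) nat(2) f x y(2) unfolding nat_trans_def by auto
      finally show "Fa e n f (\<iota> n (\<eta> n x)) = Fa e n f (\<iota> n (\<eta>' n x))" .
    qed
    then show ?thesis using \<iota>(2) y unfolding inj_on_def by blast
  qed
qed

end

lemma finite_Hom_if_determined_below:
  assumes X: "\<And>n. finite (Xo n)" and Y: "\<And>n. finite (Yo n)"
    and determined: "\<And>\<eta> \<eta>'. \<eta> \<in> Hom p Xo Xa Yo Ya \<Longrightarrow> \<eta>' \<in> Hom p Xo Xa Yo Ya \<Longrightarrow>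
                        (\<And>e. e \<le> D \<Longrightarrow> \<eta> e = \<eta>' e) \<Longrightarrow> \<eta> = \<eta>'"
  shows "finite (Hom p Xo Xa Yo Ya)"
proof -
  let ?restr = "\<lambda>\<eta>. restrict \<eta> {..D}"
  have "inj_on ?restr (Hom p Xo Xa Yo Ya)"
  proof (rule inj_onI, rule determined)
    fix \<eta> \<eta>' e assume "?restr \<eta> = ?restr \<eta>'" "e \<le> D"
    from fun_cong[OF this(1), of e] this(2) show "\<eta> e = \<eta>' e" by simp
  qed
  moreover have "?restr ` Hom p Xo Xa Yo Ya \<subseteq> (\<Pi>\<^sub>E e\<in>{..D}. \<Pi>\<^sub>E x\<in>Xo e. Yo e)"
    unfolding Hom_def nat_trans_def by (auto simp: PiE_iff extensional_def)
  moreover have "finite (\<Pi>\<^sub>E e\<in>{..D}. \<Pi>\<^sub>E x\<in>Xo e. Yo e)"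
    using X Y by (intro finite_PiE) auto
  ultimately show ?thesis by (meson finite_imageD finite_subset)
qed

theorem corollary3p9:
  fixes p :: nat
    and Xo :: "nat \<Rightarrow> 'a set" and Xa :: "nat \<Rightarrow> nat \<Rightarrow> mat \<Rightarrow> 'a \<Rightarrow> 'a"
    and Yo :: "nat \<Rightarrow> 'b set" and Ya :: "nat \<Rightarrow> nat \<Rightarrow> mat \<Rightarrow> 'b \<Rightarrow> 'b"
  assumes "prime p"
    and "presheaf p Xo Xa" and "presheaf p Yo Ya"
    and "\<forall>n. finite (Xo n)"
    and "finite_presheaf TYPE('v) p Yo Ya"
  shows "finite (Hom p Xo Xa Yo Ya)"
proof -
  obtain Fo :: "nat \<Rightarrow> 'v set" and Fa add z sm \<iota>
    where F: "vs_presheaf p Fo Fa add z sm" and series: "has_comp_series p Fo Fa add z sm"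
      and \<iota>: "nat_trans p Yo Ya Fo Fa \<iota>" "\<forall>n. inj_on (\<iota> n) (Yo n)"
    using assms(5) unfolding finite_presheaf_def by blast
  interpret linear_presheaf p Fo Fa add z sm
    using F prime_gt_1_nat[OF assms(1)] by unfold_locales
  obtain D where D: "\<And>n. Fo n \<inter> low_kernel D n \<subseteq> {z n}"
    using low_kernel_vanishes[OF series] by blast
  have "finite (Yo n)" for n
    using finite_Fo[OF series] \<iota> unfolding nat_trans_def
    by (metis finite_imageD finite_subset image_subsetI)
  then show ?thesis
    by (rule finite_Hom_if_determined_below[OF assms(4)[rule_format]])
      (rule Hom_eq_if_eq_below[OF D \<iota>])
qed

end
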